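(* For each $d\ge 1$, the class of matroids that admit a $d$-th symmetric power is minor closed.
   Context: For a finite set $E$, $\mathrm{Sym}_d(E)$ is the set of multisets of size $d$ from $E$, written multiplicatively ($\alpha\beta$ is multiset union), $\mathrm{Sym}_0(E)=\{1\}$. For $\alpha\in\mathrm{Sym}_{d-i}(E)$ and a matroid $N$ on $\mathrm{Sym}_d(E)$, $N|_\alpha$ denotes the restriction of $N$ to $\{\alpha\beta:\beta\in\mathrm{Sym}_i(E)\}$. Given a matroid $M$ on $E$, a $d$-th symmetric quasi power of $M$ is a sequence $(M_1,\dots,M_d)$ of matroids with $M_1=M$, $M_i$ on ground set $\mathrm{Sym}_i(E)$, such that for all $1\le i\le d$ and $\alpha\in\mathrm{Sym}_{d-i}(E)$: if no element of $\alpha$ is a loop of $M$, then $\beta\mapsto\alpha\beta$ is an isomorphism $M_i\cong M_d|_\alpha$; otherwise $\mathrm{rk}(M_d|_\alpha)=0$. It is a $d$-th symmetric power of $M$ if moreover $\mathrm{rk}(M_d)=\binom{\mathrm{rk}(M)+d-1}{d}$. A matroid $M$ admits a $d$-th symmetric power if such a sequence exists. *)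

theory Defs
  imports Main "HOL-Library.Multiset"
begin

type_synonym 'a matroid = "'a set \<times> ('a set \<Rightarrow> bool)"

definition ground :: "'a matroid \<Rightarrow> 'a set" where "ground M = fst M"
definition indep :: "'a matroid \<Rightarrow> 'a set \<Rightarrow> bool" where "indep M = snd M"

definition matroid :: "'a matroid \<Rightarrow> bool" where
  "matroid M \<longleftrightarrow> finite (ground M) \<and> indep M {} \<and>
     (\<forall>X. indep M X \<longrightarrow> X \<subseteq> ground M) \<and>
     (\<forall>X Y. indep M Y \<and> X \<subseteq> Y \<longrightarrow> indep M X) \<and>
     (\<forall>X Y. indep M X \<and> indep M Y \<and> card X < card Y \<longrightarrow>
        (\<exists>e\<in>Y - X. indep M (insert e X)))"

definition mrank :: "'a matroid \<Rightarrow> 'a set \<Rightarrow> nat" where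
  "mrank M X = Max (card ` {Y. Y \<subseteq> X \<and> indep M Y})"

definition rk :: "'a matroid \<Rightarrow> nat" where "rk M = mrank M (ground M)"

definition loop :: "'a matroid \<Rightarrow> 'a \<Rightarrow> bool" where
  "loop M e \<longleftrightarrow> e \<in> ground M \<and> \<not> indep M {e}"

definition restrict :: "'a matroid \<Rightarrow> 'a set \<Rightarrow> 'a matroid" where
  "restrict M S = (S, \<lambda>X. X \<subseteq> S \<and> indep M X)"

definition delete :: "'a matroid \<Rightarrow> 'a set \<Rightarrow> 'a matroid" where
  "delete M D = restrict M (ground M - D)"

definition contract :: "'a matroid \<Rightarrow> 'a set \<Rightarrow> 'a matroid" where
  "contract M C = (ground M - C,
     \<lambda>X. X \<subseteq> ground M - C \<and> mrank M (X \<union> C) = card X + mrank M C)"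

definition minor :: "'a matroid \<Rightarrow> 'a matroid \<Rightarrow> bool" where
  "minor N M \<longleftrightarrow> (\<exists>C D. C \<subseteq> ground M \<and> D \<subseteq> ground M \<and> C \<inter> D = {} \<and>
      N = delete (contract M C) D)"

definition iso_via :: "('a \<Rightarrow> 'b) \<Rightarrow> 'a matroid \<Rightarrow> 'b matroid \<Rightarrow> bool" where
  "iso_via f M N \<longleftrightarrow> bij_betw f (ground M) (ground N) \<and>
     (\<forall>X. X \<subseteq> ground M \<longrightarrow> (indep M X \<longleftrightarrow> indep N (f ` X)))"

text \<open>Sym_d(E): multisets of size d with elements from E (product = multiset sum).\<close>
definition Sym :: "'a set \<Rightarrow> nat \<Rightarrow> 'a multiset set" where
  "Sym E d = {m. set_mset m \<subseteq> E \<and> size m = d}"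

definition restr_at :: "'a multiset matroid \<Rightarrow> 'a set \<Rightarrow> nat \<Rightarrow> 'a multiset \<Rightarrow> 'a multiset matroid" where
  "restr_at N E i \<alpha> = restrict N ((\<lambda>\<beta>. \<alpha> + \<beta>) ` Sym E i)"

definition sym_quasi_power :: "'a matroid \<Rightarrow> nat \<Rightarrow> (nat \<Rightarrow> 'a multiset matroid) \<Rightarrow> bool" where
  "sym_quasi_power M d Ms \<longleftrightarrow>
     (\<forall>i\<in>{1..d}. matroid (Ms i) \<and> ground (Ms i) = Sym (ground M) i) \<and>
     iso_via (\<lambda>e. {#e#}) M (Ms 1) \<and>
     (\<forall>i\<in>{1..d}. \<forall>\<alpha>\<in>Sym (ground M) (d - i).
        (if (\<forall>e\<in>#\<alpha>. \<not> loop M e)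
         then iso_via (\<lambda>\<beta>. \<alpha> + \<beta>) (Ms i) (restr_at (Ms d) (ground M) i \<alpha>)
         else rk (restr_at (Ms d) (ground M) i \<alpha>) = 0))"

definition sym_power :: "'a matroid \<Rightarrow> nat \<Rightarrow> (nat \<Rightarrow> 'a multiset matroid) \<Rightarrow> bool" where
  "sym_power M d Ms \<longleftrightarrow> sym_quasi_power M d Ms \<and>
     rk (Ms d) = (rk M + d - 1) choose d"

definition admits_sym_power :: "'a matroid \<Rightarrow> nat \<Rightarrow> bool" where
  "admits_sym_power M d \<longleftrightarrow> (\<exists>Ms. sym_power M d Ms)"

end

theory Submission
  imports Defs
begin

text \<open>
  Every minor is a deletion of a contraction, and a symmetric power of M induces one of each.
  Deleting \<open>E - F\<close> restricts every \<open>M\<^sub>i\<close> to \<open>Sym\<^sub>i(F)\<close>; contracting C contracts every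
  \<open>M\<^sub>i\<close> by the set \<open>T\<^sub>i\<close> of monomials having a factor in C.

  Both rank computations rest on an exchange principle: if x is spanned by A in M, then, through
  \<open>M \<cong> M\<^sub>d|\<^sub>\<alpha>\<close>, the monomial \<open>\<alpha>x\<close> is spanned by \<open>\<alpha>A\<close> in \<open>M\<^sub>d\<close>. Replacing factors one at a
  time, \<open>Sym\<^sub>d(B)\<close> spans \<open>Sym\<^sub>d(F)\<close> for a basis B of F; by the rank condition \<open>Sym\<^sub>d(B)\<close> is a basis
  of \<open>M\<^sub>d\<close> for a basis B of M, and the rank of \<open>M\<^sub>d/T\<^sub>d\<close> is \<open>|Sym\<^sub>d(B - C)|\<close> when B extends a
  basis of C.

  The isomorphisms \<open>M\<^sub>i/T\<^sub>i \<cong> (M\<^sub>d/T\<^sub>d)|\<^sub>\<alpha>\<close> are composed one factor of \<open>\<alpha>\<close> at a time. For e not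
  spanned by C, the sets \<open>e\<cdot>Sym\<^sub>d\<^sub>-\<^sub>1(E)\<close> and \<open>T\<^sub>d\<close> form a modular pair in \<open>M\<^sub>d\<close> (the independent
  set \<open>Sym\<^sub>d(B)\<close> meets each of them, and their intersection \<open>e\<cdot>T\<^sub>d\<^sub>-\<^sub>1\<close>, in a basis), so
  contracting \<open>e\<cdot>T\<^sub>d\<^sub>-\<^sub>1\<close> inside \<open>e\<cdot>Sym\<^sub>d\<^sub>-\<^sub>1(E)\<close> has the same effect as contracting \<open>T\<^sub>d\<close>.
\<close>

section \<open>Rank function of a matroid\<close>

definition basis_of :: "'a matroid \<Rightarrow> 'a set \<Rightarrow> 'a set \<Rightarrow> bool" where
  "basis_of M X B \<longleftrightarrow> B \<subseteq> X \<and> indep M B \<and> card B = mrank M X"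

context
  fixes M :: "'a matroid"
  assumes M: "matroid M"
begin

lemma finite_ground: "finite (ground M)"
  using M by (simp add: matroid_def)

lemma indep_empty: "indep M {}"
  using M by (simp add: matroid_def)

lemma indep_subset_ground: "indep M X \<Longrightarrow> X \<subseteq> ground M"
  using M by (simp add: matroid_def)

lemma indep_finite: "indep M X \<Longrightarrow> finite X"
  using indep_subset_ground finite_ground finite_subset by blast

lemma indep_subset: "indep M Y \<Longrightarrow> X \<subseteq> Y \<Longrightarrow> indep M X"
  using M unfolding matroid_def by blast

lemma indep_augment:
  "indep M X \<Longrightarrow> indep M Y \<Longrightarrow> card X < card Y \<Longrightarrow> \<exists>e\<in>Y - X. indep M (insert e X)"
  using M by (simp add: matroid_def)

lemma finite_card_indep_subsets: "finite (card ` {Y. Y \<subseteq> X \<and> indep M Y})"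
proof -
  have "{Y. Y \<subseteq> X \<and> indep M Y} \<subseteq> Pow (ground M)"
    using indep_subset_ground by auto
  then show ?thesis
    using finite_ground by (meson finite_Pow_iff finite_imageI finite_subset)
qed

lemma card_le_mrank: "Y \<subseteq> X \<Longrightarrow> indep M Y \<Longrightarrow> card Y \<le> mrank M X"
  unfolding mrank_def by (rule Max_ge[OF finite_card_indep_subsets]) auto

lemma ex_basis_of: "\<exists>B. basis_of M X B"
proof -
  have "mrank M X \<in> card ` {Y. Y \<subseteq> X \<and> indep M Y}"
    unfolding mrank_def by (rule Max_in[OF finite_card_indep_subsets]) (use indep_empty in auto)
  then show ?thesis by (auto simp: basis_of_def)
qed

lemma basis_of_extend:
  assumes "I \<subseteq> X" "indep M I"
  shows "\<exists>B. basis_of M X B \<and> I \<subseteq> B"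
  using assms
proof (induction "mrank M X - card I" arbitrary: I rule: less_induct)
  case less
  obtain Y where Y: "basis_of M X Y" using ex_basis_of by blast
  show ?case
  proof (cases "card I < card Y")
    case False
    then have "basis_of M X I"
      using less.prems Y card_le_mrank[of I X] by (auto simp: basis_of_def)
    then show ?thesis by blast
  next
    case True
    then obtain e where e: "e \<in> Y - I" "indep M (insert e I)"
      using indep_augment[OF less.prems(2), of Y] Y by (auto simp: basis_of_def)
    have "card (insert e I) = Suc (card I)"
      using e(1) indep_finite[OF less.prems(2)] by simp
    then have "mrank M X - card (insert e I) < mrank M X - card I"
      using True Y by (simp add: basis_of_def)
    then show ?thesis
      using less.hyps[of "insert e I"] e less.prems Y by (auto simp: basis_of_def)
  qed
qed

lemma basis_of_extend_basis_of:
  "basis_of M X I \<Longrightarrow> X \<subseteq> Y \<Longrightarrow> \<exists>B. basis_of M Y B \<and> I \<subseteq> B"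
  using basis_of_extend[of I Y] by (auto simp: basis_of_def)

lemma mrank_le_card: "finite X \<Longrightarrow> mrank M X \<le> card X"
proof -
  assume "finite X"
  moreover obtain B where "basis_of M X B" using ex_basis_of by blast
  ultimately show ?thesis using card_mono[of X B] by (simp add: basis_of_def)
qed

lemma mrank_mono: "X \<subseteq> Y \<Longrightarrow> mrank M X \<le> mrank M Y"
proof -
  assume "X \<subseteq> Y"
  moreover obtain B where "basis_of M X B" using ex_basis_of by blast
  ultimately show ?thesis using card_le_mrank[of B Y] by (auto simp: basis_of_def)
qed

lemma mrank_indep: "indep M X \<Longrightarrow> mrank M X = card X"
  using card_le_mrank[of X X] mrank_le_card indep_finite by (simp add: le_antisym)

lemma indep_if_mrank_eq_card: "finite X \<Longrightarrow> mrank M X = card X \<Longrightarrow> indep M X"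
proof -
  assume "finite X" "mrank M X = card X"
  moreover obtain B where "basis_of M X B" using ex_basis_of by blast
  ultimately show ?thesis using card_subset_eq[of X B] by (auto simp: basis_of_def)
qed

lemma mrank_submodular: "mrank M (A \<union> B) + mrank M (A \<inter> B) \<le> mrank M A + mrank M B"
proof -
  obtain I where I: "basis_of M (A \<inter> B) I" using ex_basis_of by blast
  obtain IA where IA: "basis_of M A IA" "I \<subseteq> IA"
    using basis_of_extend_basis_of[OF I] by blast
  obtain J where J: "basis_of M (A \<union> B) J" "IA \<subseteq> J"
    using basis_of_extend_basis_of[OF IA(1)] by blast
  have fJ: "finite J" using J indep_finite by (auto simp: basis_of_def)
  have "J \<inter> A = IA"
  proof -
    have "card (J \<inter> A) \<le> card IA"
      using card_le_mrank[of "J \<inter> A" A] indep_subset J IA by (auto simp: basis_of_def)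
    moreover have "IA \<subseteq> J \<inter> A" using IA J by (auto simp: basis_of_def)
    ultimately show ?thesis using card_seteq[of "J \<inter> A" IA] fJ by auto
  qed
  have "card J = card (J \<inter> A) + card (J - A)"
    using fJ by (metis Int_Diff_disjoint Int_Diff_Un card_Un_disjoint finite_Diff finite_Int)
  then have cJ: "card J = mrank M A + card (J - A)"
    using \<open>J \<inter> A = IA\<close> IA by (simp add: basis_of_def)
  have "card ((J - A) \<union> I) = card (J - A) + card I"
    using I fJ indep_finite by (intro card_Un_disjoint) (auto simp: basis_of_def)
  moreover have "card ((J - A) \<union> I) \<le> mrank M B"
    using card_le_mrank[of "(J - A) \<union> I" B] indep_subset[of J] J I IA by (auto simp: basis_of_def)
  ultimately show ?thesis using cJ I J by (simp add: basis_of_def)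
qed

lemma mrank_Un_le: "mrank M (A \<union> B) \<le> mrank M A + mrank M B"
  using mrank_submodular[of A B] by linarith

lemma mrank_insert_le: "mrank M (insert x A) \<le> mrank M A + 1"
  using mrank_Un_le[of "{x}" A] mrank_le_card[of "{x}"] by simp

lemma mrank_insert_eq_mono:
  assumes "A \<subseteq> A'" "mrank M (insert x A) = mrank M A"
  shows "mrank M (insert x A') = mrank M A'"
proof -
  have "insert x A \<union> A' = insert x A'" using assms by auto
  then have "mrank M (insert x A') + mrank M (insert x A \<inter> A') \<le> mrank M (insert x A) + mrank M A'"
    using mrank_submodular[of "insert x A" A'] by simp
  moreover have "mrank M A \<le> mrank M (insert x A \<inter> A')" using assms by (intro mrank_mono) auto
  moreover have "mrank M A' \<le> mrank M (insert x A')" by (rule mrank_mono) auto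
  ultimately show ?thesis using assms(2) by linarith
qed

lemma mrank_Un_eq_if_insert_eq:
  assumes "finite X" "\<forall>x\<in>X. mrank M (insert x A) = mrank M A"
  shows "mrank M (A \<union> X) = mrank M A"
  using assms
proof (induction X rule: finite_induct)
  case (insert x F)
  then have "mrank M (insert x (A \<union> F)) = mrank M (A \<union> F)"
    using mrank_insert_eq_mono[of A "A \<union> F" x] by auto
  then show ?case using insert by auto
qed simp

lemma mrank_insert_eq_trans:
  assumes "finite A" "\<forall>y\<in>A. mrank M (insert y S) = mrank M S"
    and "mrank M (insert m A) = mrank M A"
  shows "mrank M (insert m S) = mrank M S"
proof -
  have "mrank M (S \<union> A) = mrank M S" using mrank_Un_eq_if_insert_eq assms(1,2) by blast
  moreover have "mrank M (insert m (S \<union> A)) = mrank M (S \<union> A)"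
    using mrank_insert_eq_mono[of A "S \<union> A" m] assms(3) by auto
  moreover have "mrank M (insert m S) \<le> mrank M (insert m (S \<union> A))" by (rule mrank_mono) auto
  moreover have "mrank M S \<le> mrank M (insert m S)" by (rule mrank_mono) auto
  ultimately show ?thesis by linarith
qed

lemma mrank_insert_rank0: "mrank M {x} = 0 \<Longrightarrow> mrank M (insert x A) = mrank M A"
  using mrank_Un_le[of "{x}" A] mrank_mono[OF subset_insertI, of A x] by simp

lemma mrank_eq_0I: "\<forall>x\<in>X. \<not> indep M {x} \<Longrightarrow> mrank M X = 0"
proof -
  assume dep: "\<forall>x\<in>X. \<not> indep M {x}"
  obtain B where B: "basis_of M X B" using ex_basis_of by blast
  then have "B = {}" using dep indep_subset[of B] unfolding basis_of_def by blast
  then show ?thesis using B by (simp add: basis_of_def)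
qed

lemma not_loop_if_mrank_insert_neq: "mrank M (insert e A) \<noteq> mrank M A \<Longrightarrow> \<not> loop M e"
  using mrank_eq_0I[of "{e}"] mrank_insert_rank0 by (auto simp: loop_def)

lemma basis_of_spans:
  assumes "basis_of M X B" "x \<in> X"
  shows "mrank M (insert x B) = mrank M B"
proof -
  have "mrank M (insert x B) \<le> mrank M X" using assms by (intro mrank_mono) (auto simp: basis_of_def)
  moreover have "mrank M B = mrank M X" using assms mrank_indep by (simp add: basis_of_def)
  moreover have "mrank M B \<le> mrank M (insert x B)" by (intro mrank_mono) auto
  ultimately show ?thesis by linarith
qed

lemma basis_of_Int:
  assumes "basis_of M T BT" "indep M B" "BT \<subseteq> B"
  shows "B \<inter> T = BT"
proof -
  have "card (B \<inter> T) \<le> card BT"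
    using card_le_mrank[of "B \<inter> T" T] indep_subset[of B] assms by (auto simp: basis_of_def)
  moreover have "BT \<subseteq> B \<inter> T" using assms by (auto simp: basis_of_def)
  ultimately show ?thesis using card_seteq[of "B \<inter> T" BT] indep_finite assms(2) by auto
qed

lemma basis_of_extend_insert:
  assumes BC: "basis_of M C BC" and X: "insert e C \<subseteq> X"
    and spans: "mrank M (insert e C) \<noteq> mrank M C"
  shows "\<exists>B. basis_of M X B \<and> insert e BC \<subseteq> B"
proof -
  obtain I where I: "basis_of M (insert e C) I" "BC \<subseteq> I"
    using basis_of_extend_basis_of[OF BC] by blast
  have "e \<in> I"
  proof (rule ccontr)
    assume "e \<notin> I"
    then have "card I \<le> mrank M C" using I card_le_mrank[of I C] by (auto simp: basis_of_def)
    moreover have "mrank M C \<le> mrank M (insert e C)" by (rule mrank_mono) auto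
    ultimately show False using I spans by (simp add: basis_of_def)
  qed
  then show ?thesis using basis_of_extend_basis_of[OF I(1) X] I(2) by blast
qed

lemma basis_of_pair_spans:
  assumes BC: "basis_of M C BC" and B: "basis_of M (ground M) B" "BC \<subseteq> B"
    and x: "x \<in> ground M"
  shows "(if x \<in> C then BC else B) \<subseteq> B \<and>
    mrank M (insert x (if x \<in> C then BC else B)) = mrank M (if x \<in> C then BC else B)"
  using basis_of_spans[OF BC] basis_of_spans[OF B(1) x] B(2) by simp

lemma mrank_modular_if_indep:
  assumes I: "indep M I"
    and Y: "mrank M Y = card (Y \<inter> I)" and T: "mrank M T = card (T \<inter> I)"
    and YT: "mrank M (Y \<inter> T) = card (Y \<inter> T \<inter> I)"
  shows "mrank M Y + mrank M T \<le> mrank M (Y \<union> T) + mrank M (Y \<inter> T)"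
proof -
  have "finite I" by (rule indep_finite[OF I])
  moreover have "(Y \<union> T) \<inter> I = (Y \<inter> I) \<union> (T \<inter> I)" "Y \<inter> T \<inter> I = (Y \<inter> I) \<inter> (T \<inter> I)" by auto
  ultimately have "card (Y \<inter> I) + card (T \<inter> I) = card ((Y \<union> T) \<inter> I) + card (Y \<inter> T \<inter> I)"
    using card_Un_Int[of "Y \<inter> I" "T \<inter> I"] by simp
  moreover have "card ((Y \<union> T) \<inter> I) \<le> mrank M (Y \<union> T)"
    using card_le_mrank indep_subset[OF I] by simp
  ultimately show ?thesis using Y T YT by linarith
qed

lemma mrank_Un_modular:
  assumes modular: "mrank M Y + mrank M T \<le> mrank M (Y \<union> T) + mrank M (Y \<inter> T)"
    and Z: "Z \<subseteq> Y"
  shows "mrank M (Z \<union> (Y \<inter> T)) + mrank M T = mrank M (Z \<union> T) + mrank M (Y \<inter> T)"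
proof -
  let ?r = "mrank M" and ?A = "Y \<inter> T"
  have "(Z \<union> ?A) \<union> T = Z \<union> T" by auto
  then have "?r (Z \<union> T) + ?r ((Z \<union> ?A) \<inter> T) \<le> ?r (Z \<union> ?A) + ?r T"
    using mrank_submodular[of "Z \<union> ?A" T] by simp
  moreover have "?r ?A \<le> ?r ((Z \<union> ?A) \<inter> T)" by (rule mrank_mono) auto
  moreover have "Y \<union> (Z \<union> T) = Y \<union> T" using Z by auto
  then have "?r (Y \<union> T) + ?r (Y \<inter> (Z \<union> T)) \<le> ?r Y + ?r (Z \<union> T)"
    using mrank_submodular[of Y "Z \<union> T"] by simp
  moreover have "?r (Z \<union> ?A) \<le> ?r (Y \<inter> (Z \<union> T))" using Z by (intro mrank_mono) auto
  ultimately show ?thesis using modular by linarith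
qed

end

section \<open>Restriction, contraction and isomorphisms\<close>

lemma ground_restrict [simp]: "ground (restrict M S) = S"
  by (simp add: restrict_def ground_def)

lemma indep_restrict [simp]: "indep (restrict M S) X \<longleftrightarrow> X \<subseteq> S \<and> indep M X"
  by (simp add: restrict_def indep_def)

lemma ground_contract [simp]: "ground (contract M C) = ground M - C"
  by (simp add: contract_def ground_def)

lemma indep_contract [simp]:
  "indep (contract M C) X \<longleftrightarrow> X \<subseteq> ground M - C \<and> mrank M (X \<union> C) = card X + mrank M C"
  by (simp add: contract_def indep_def)

lemma mrank_restrict: "mrank (restrict M S) X = mrank M (X \<inter> S)"
proof -
  have "{Y. Y \<subseteq> X \<and> indep (restrict M S) Y} = {Y. Y \<subseteq> X \<inter> S \<and> indep M Y}" by auto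
  then show ?thesis unfolding mrank_def by simp
qed

lemma restrict_matroid:
  assumes M: "matroid M" and S: "S \<subseteq> ground M"
  shows "matroid (restrict M S)"
proof -
  have "\<exists>e\<in>Y - X. indep (restrict M S) (insert e X)"
    if "indep (restrict M S) X" "indep (restrict M S) Y" "card X < card Y" for X Y
    using indep_augment[OF M, of X Y] that by auto
  moreover have "finite S" using finite_ground[OF M] S finite_subset by auto
  ultimately show ?thesis
    unfolding matroid_def using indep_empty[OF M] indep_subset[OF M] by auto
qed

lemma loop_restrict: "F \<subseteq> ground M \<Longrightarrow> e \<in> F \<Longrightarrow> loop (restrict M F) e \<longleftrightarrow> loop M e"
  by (auto simp: loop_def)

lemma contract_indep_subset:
  assumes M: "matroid M" and Y: "indep (contract M C) Y" and XY: "X \<subseteq> Y"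
  shows "indep (contract M C) X"
proof -
  let ?r = "mrank M"
  have fY: "finite Y" using Y finite_ground[OF M] finite_subset by auto
  have "Y \<union> C = (X \<union> C) \<union> (Y - X)" using XY by auto
  then have "?r (Y \<union> C) \<le> ?r (X \<union> C) + ?r (Y - X)" using mrank_Un_le[OF M] by metis
  moreover have "?r (Y - X) \<le> card (Y - X)" using mrank_le_card[OF M] fY by auto
  moreover have "card Y = card X + card (Y - X)"
    using fY XY by (metis card_Diff_subset card_mono finite_subset le_add_diff_inverse)
  ultimately have lower: "card X + ?r C \<le> ?r (X \<union> C)" using Y by auto
  have "?r (X \<union> C) \<le> ?r X + ?r C" by (rule mrank_Un_le[OF M])
  moreover have "?r X \<le> card X" using mrank_le_card[OF M] fY XY finite_subset by auto
  ultimately show ?thesis using lower Y XY by auto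
qed

lemma contract_indep_augment:
  assumes M: "matroid M" and X: "indep (contract M C) X" and Y: "indep (contract M C) Y"
    and less: "card X < card Y"
  shows "\<exists>e\<in>Y - X. indep (contract M C) (insert e X)"
proof (rule ccontr)
  let ?r = "mrank M"
  assume no: "\<not> ?thesis"
  have fX: "finite X" and fY: "finite Y"
    using X Y finite_ground[OF M] finite_subset by auto
  have "?r (insert e (X \<union> C)) = ?r (X \<union> C)" if e: "e \<in> Y - X" for e
  proof -
    have "?r (insert e X \<union> C) \<noteq> card (insert e X) + ?r C" using no e X Y by auto
    then have "?r (insert e (X \<union> C)) \<noteq> ?r (X \<union> C) + 1" using e fX X by simp
    moreover have "?r (insert e (X \<union> C)) \<le> ?r (X \<union> C) + 1" by (rule mrank_insert_le[OF M])
    moreover have "?r (X \<union> C) \<le> ?r (insert e (X \<union> C))" by (rule mrank_mono[OF M]) auto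
    ultimately show ?thesis by linarith
  qed
  then have "?r ((X \<union> C) \<union> (Y - X)) = ?r (X \<union> C)"
    using mrank_Un_eq_if_insert_eq[OF M] fY by blast
  moreover have "?r (Y \<union> C) \<le> ?r ((X \<union> C) \<union> (Y - X))" by (rule mrank_mono[OF M]) auto
  ultimately show False using X Y less by auto
qed

lemma contract_matroid:
  assumes M: "matroid M"
  shows "matroid (contract M C)"
  unfolding matroid_def
proof (intro conjI allI impI)
  show "finite (ground (contract M C))" using finite_ground[OF M] by simp
  fix X Y
  show "indep (contract M C) X" if "indep (contract M C) Y \<and> X \<subseteq> Y"
    using that contract_indep_subset[OF M] by blast
  show "\<exists>e\<in>Y - X. indep (contract M C) (insert e X)"
    if "indep (contract M C) X \<and> indep (contract M C) Y \<and> card X < card Y"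
    using that contract_indep_augment[OF M] by blast
qed simp_all

lemma loop_contract_iff:
  assumes M: "matroid M" and e: "e \<in> ground M - C"
  shows "loop (contract M C) e \<longleftrightarrow> mrank M (insert e C) = mrank M C"
  using mrank_insert_le[OF M, of e C] mrank_mono[OF M subset_insertI, of C e] e
  by (auto simp: loop_def)

lemma rk_contract:
  assumes M: "matroid M" and C: "C \<subseteq> ground M"
  shows "rk (contract M C) = rk M - mrank M C"
proof -
  let ?r = "mrank M" and ?E = "ground M"
  obtain X where X: "basis_of (contract M C) (?E - C) X"
    using ex_basis_of[OF contract_matroid[OF M]] by blast
  have "?r (X \<union> C) \<le> ?r ?E" using X C by (intro mrank_mono[OF M]) (auto simp: basis_of_def)
  then have upper: "rk (contract M C) + ?r C \<le> rk M" using X by (simp add: basis_of_def rk_def)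
  obtain BC where BC: "basis_of M C BC" using ex_basis_of[OF M] by blast
  obtain B where B: "basis_of M ?E B" "BC \<subseteq> B" using basis_of_extend_basis_of[OF M BC C] by blast
  have fB: "finite B" using B indep_finite[OF M] by (simp add: basis_of_def)
  have "B \<inter> C = BC" using basis_of_Int[OF M BC] B by (simp add: basis_of_def)
  then have "card (B - C) = card B - card BC"
    using finite_subset[OF B(2) fB] card_Diff_subset_Int[of B C] by simp
  then have cB: "card B = card (B - C) + ?r C"
    using fB B(2) BC card_mono[of B BC] by (simp add: basis_of_def)
  have "?r B \<le> ?r ((B - C) \<union> C)" by (rule mrank_mono[OF M]) auto
  moreover have "?r ((B - C) \<union> C) \<le> ?r (B - C) + ?r C" by (rule mrank_Un_le[OF M])
  moreover have "?r (B - C) \<le> card (B - C)" using mrank_le_card[OF M] fB by simp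
  ultimately have "?r ((B - C) \<union> C) = card (B - C) + ?r C"
    using mrank_indep[OF M] B cB by (simp add: basis_of_def)
  then have "indep (contract M C) (B - C)" using B by (auto simp: basis_of_def)
  then have "card (B - C) \<le> rk (contract M C)"
    using card_le_mrank[OF contract_matroid[OF M], of "B - C" "?E - C"] by (auto simp: rk_def)
  moreover have "card B = rk M" using B by (simp add: basis_of_def rk_def)
  ultimately show ?thesis using upper cB by linarith
qed

lemma iso_via_mrank:
  assumes iso: "iso_via f A B" and X: "X \<subseteq> ground A"
  shows "mrank B (f ` X) = mrank A X"
proof -
  have inj: "inj_on f (ground A)" using iso by (simp add: iso_via_def bij_betw_def)
  have eq: "{Y'. Y' \<subseteq> f ` X \<and> indep B Y'} = (`) f ` {Y. Y \<subseteq> X \<and> indep A Y}"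
  proof (intro equalityI subsetI)
    fix Y' assume "Y' \<in> {Y'. Y' \<subseteq> f ` X \<and> indep B Y'}"
    then have Y': "Y' \<subseteq> f ` X" "indep B Y'" by auto
    then have "f ` (X \<inter> f -` Y') = Y'" by auto
    moreover have "X \<inter> f -` Y' \<subseteq> ground A" using X by auto
    then have "indep A (X \<inter> f -` Y')"
      using iso Y'(2) \<open>f ` (X \<inter> f -` Y') = Y'\<close> unfolding iso_via_def by metis
    ultimately show "Y' \<in> (`) f ` {Y. Y \<subseteq> X \<and> indep A Y}" by blast
  qed (use iso X in \<open>auto simp: iso_via_def\<close>)
  have "card ` {Y'. Y' \<subseteq> f ` X \<and> indep B Y'} = card ` {Y. Y \<subseteq> X \<and> indep A Y}"
    unfolding eq image_image
    by (intro image_cong refl card_image) (use inj X in \<open>auto intro: inj_on_subset\<close>)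
  then show ?thesis unfolding mrank_def by simp
qed

lemma iso_via_restrict:
  assumes iso: "iso_via f A B" and S: "S \<subseteq> ground A"
  shows "iso_via f (restrict A S) (restrict B (f ` S))"
  using iso S bij_betw_subset[of f "ground A" "ground B" S]
  by (auto simp: iso_via_def)

lemma iso_via_contract:
  assumes iso: "iso_via f A B" and C: "C \<subseteq> ground A"
  shows "iso_via f (contract A C) (contract B (f ` C))"
proof -
  have bij: "bij_betw f (ground A) (ground B)" using iso by (simp add: iso_via_def)
  then have inj: "inj_on f (ground A)" by (simp add: bij_betw_def)
  have "bij_betw f (ground A - C) (ground B - f ` C)"
    using bij C by (metis bij_betw_subset bij_betw_def Diff_subset inj_on_image_set_diff)
  moreover have "indep (contract A C) X \<longleftrightarrow> indep (contract B (f ` C)) (f ` X)"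
    if X: "X \<subseteq> ground A - C" for X
  proof -
    have "f ` X \<subseteq> ground B - f ` C" using calculation X by (auto simp: bij_betw_def)
    moreover have "mrank B (f ` X \<union> f ` C) = mrank A (X \<union> C)"
      using iso_via_mrank[OF iso, of "X \<union> C"] X C by (auto simp: image_Un)
    moreover have "card (f ` X) = card X"
      using inj X by (meson Diff_subset card_image inj_on_subset subset_trans)
    ultimately show ?thesis using X iso_via_mrank[OF iso C] by simp
  qed
  ultimately show ?thesis by (simp add: iso_via_def)
qed

section \<open>Symmetric quasi powers\<close>

definition shift_iso :: "'a multiset \<Rightarrow> 'a multiset matroid \<Rightarrow> 'a multiset matroid \<Rightarrow> bool" where
  "shift_iso \<alpha> P Q \<longleftrightarrow> iso_via ((+) \<alpha>) P (restrict Q ((+) \<alpha> ` ground P))"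

lemma shift_iso_restr_at:
  "ground P = Sym E i \<Longrightarrow> shift_iso \<alpha> P Q \<longleftrightarrow> iso_via ((+) \<alpha>) P (restr_at Q E i \<alpha>)"
  by (simp add: shift_iso_def restr_at_def)

lemma bij_betw_plus_multiset: "bij_betw ((+) (a :: 'a multiset)) G ((+) a ` G)"
  by (simp add: bij_betw_def inj_on_def)

lemma shift_iso_iff: "shift_iso a P Q \<longleftrightarrow> (\<forall>X \<subseteq> ground P. indep P X \<longleftrightarrow> indep Q ((+) a ` X))"
  unfolding shift_iso_def iso_via_def by (auto simp: bij_betw_plus_multiset)

lemma shift_iso_mrank:
  assumes iso: "shift_iso a P Q" and Z: "Z \<subseteq> ground P"
  shows "mrank Q ((+) a ` Z) = mrank P Z"
proof -
  have "(+) a ` Z \<subseteq> (+) a ` ground P" using Z by auto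
  then have "mrank Q ((+) a ` Z) = mrank (restrict Q ((+) a ` ground P)) ((+) a ` Z)"
    by (simp add: mrank_restrict Int_absorb2)
  also have "\<dots> = mrank P Z" using iso_via_mrank iso Z unfolding shift_iso_def by blast
  finally show ?thesis .
qed

lemma image_plus_image_plus: "(+) b ` (+) a ` X = (+) (b + a) ` (X :: 'a multiset set)"
  by (auto simp: image_image add.assoc)

lemma shift_iso_trans:
  assumes "shift_iso a P Q" "shift_iso b Q R" "(+) a ` ground P \<subseteq> ground Q"
  shows "shift_iso (b + a) P R"
  unfolding shift_iso_iff
proof (intro allI impI)
  fix X assume X: "X \<subseteq> ground P"
  then have "(+) a ` X \<subseteq> ground Q" using assms(3) by auto
  then show "indep P X \<longleftrightarrow> indep R ((+) (b + a) ` X)"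
    using assms(1,2) X unfolding shift_iso_iff image_plus_image_plus[symmetric] by blast
qed

lemma shift_iso_cancel:
  assumes "shift_iso (b + a) P R" "shift_iso b Q R" "(+) a ` ground P \<subseteq> ground Q"
  shows "shift_iso a P Q"
  unfolding shift_iso_iff
proof (intro allI impI)
  fix X assume X: "X \<subseteq> ground P"
  then have "(+) a ` X \<subseteq> ground Q" using assms(3) by auto
  then show "indep P X \<longleftrightarrow> indep Q ((+) a ` X)"
    using assms(1,2) X unfolding shift_iso_iff image_plus_image_plus[symmetric] by blast
qed

lemma shift_iso_empty: "shift_iso {#} N N"
  by (simp add: shift_iso_iff)

lemma shift_iso_restrict:
  assumes iso: "shift_iso \<alpha> P Q" and S: "S \<subseteq> ground P" and S': "(+) \<alpha> ` S \<subseteq> S'"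
  shows "shift_iso \<alpha> (restrict P S) (restrict Q S')"
  unfolding shift_iso_iff
proof (intro allI impI)
  fix X assume "X \<subseteq> ground (restrict P S)"
  then have "X \<subseteq> S" "(+) \<alpha> ` X \<subseteq> S'" using S' by auto
  then show "indep (restrict P S) X \<longleftrightarrow> indep (restrict Q S') ((+) \<alpha> ` X)"
    using iso S unfolding shift_iso_iff by auto
qed

lemma finite_Sym: "finite E \<Longrightarrow> finite (Sym E d)"
  using finite_multisets_of_size[of E d] by (simp add: Sym_def multisets_of_size_def)

lemma card_Sym: "finite E \<Longrightarrow> card (Sym E d) = (card E + d - 1) choose d"
  using card_multisets_of_size[of E d] by (simp add: Sym_def multisets_of_size_def)

lemma Sym_mono: "A \<subseteq> B \<Longrightarrow> Sym A d \<subseteq> Sym B d"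
  by (auto simp: Sym_def)

lemma Sym_1: "Sym E (Suc 0) = (\<lambda>e. {#e#}) ` E"
proof (intro equalityI subsetI)
  fix m assume "m \<in> Sym E (Suc 0)"
  then have m: "set_mset m \<subseteq> E" "size m = 1" by (auto simp: Sym_def)
  then obtain a where "m = {#a#}" using size_1_singleton_mset by blast
  then show "m \<in> (\<lambda>e. {#e#}) ` E" using m by auto
qed (auto simp: Sym_def)

lemma diff_add_in_Sym:
  assumes m: "m \<in> Sym E d" and x: "x \<in># m" and b: "b \<in> E"
  shows "m - {#x#} + {#b#} \<in> Sym E d"
proof -
  have "set_mset (m - {#x#}) \<subseteq> set_mset m" by (rule set_mset_mono) simp
  then have "set_mset (m - {#x#} + {#b#}) \<subseteq> E" using m b by (auto simp: Sym_def)
  moreover have "size (m - {#x#} + {#b#}) = size m"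
    using x by (simp add: size_Diff_singleton) (metis Suc_pred nonempty_has_size empty_iff set_mset_empty)
  ultimately show ?thesis using m by (simp add: Sym_def)
qed

lemma sym_quasi_power_matroid: "sym_quasi_power M d Ms \<Longrightarrow> i \<in> {1..d} \<Longrightarrow> matroid (Ms i)"
  by (simp add: sym_quasi_power_def)

lemma sym_quasi_power_ground:
  "sym_quasi_power M d Ms \<Longrightarrow> i \<in> {1..d} \<Longrightarrow> ground (Ms i) = Sym (ground M) i"
  by (simp add: sym_quasi_power_def)

lemma sym_quasi_power_one: "sym_quasi_power M d Ms \<Longrightarrow> iso_via (\<lambda>e. {#e#}) M (Ms 1)"
  by (simp add: sym_quasi_power_def)

lemma sym_quasi_power_shift_iso:
  "sym_quasi_power M d Ms \<Longrightarrow> i \<in> {1..d} \<Longrightarrow> \<alpha> \<in> Sym (ground M) (d - i) \<Longrightarrow>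
    \<forall>e\<in>#\<alpha>. \<not> loop M e \<Longrightarrow> shift_iso \<alpha> (Ms i) (Ms d)"
  by (simp add: sym_quasi_power_def shift_iso_restr_at)

lemma rk_restr_at: "rk (restr_at N E i \<alpha>) = mrank N ((+) \<alpha> ` Sym E i)"
  by (simp add: rk_def restr_at_def mrank_restrict)

lemma sym_quasi_power_loop:
  assumes "sym_quasi_power M d Ms" "i \<in> {1..d}" "\<alpha> \<in> Sym (ground M) (d - i)" "\<exists>e\<in>#\<alpha>. loop M e"
  shows "mrank (Ms d) ((+) \<alpha> ` Sym (ground M) i) = 0"
proof -
  have "\<not> (\<forall>e\<in>#\<alpha>. \<not> loop M e)" using assms(4) by blast
  then have "rk (restr_at (Ms d) (ground M) i \<alpha>) = 0"
    using assms(1-3) unfolding sym_quasi_power_def by auto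
  then show ?thesis by (simp add: rk_restr_at)
qed

lemma sym_quasi_power_intro:
  assumes "\<And>i. i \<in> {1..d} \<Longrightarrow> matroid (Ms i) \<and> ground (Ms i) = Sym (ground M) i"
    and "iso_via (\<lambda>e. {#e#}) M (Ms 1)"
    and "\<And>i \<alpha>. i \<in> {1..d} \<Longrightarrow> \<alpha> \<in> Sym (ground M) (d - i) \<Longrightarrow> \<forall>e\<in>#\<alpha>. \<not> loop M e \<Longrightarrow>
      shift_iso \<alpha> (Ms i) (Ms d)"
    and "\<And>i \<alpha>. i \<in> {1..d} \<Longrightarrow> \<alpha> \<in> Sym (ground M) (d - i) \<Longrightarrow> \<exists>e\<in>#\<alpha>. loop M e \<Longrightarrow>
      mrank (Ms d) ((+) \<alpha> ` Sym (ground M) i) = 0"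
  shows "sym_quasi_power M d Ms"
  unfolding sym_quasi_power_def
  using assms by (auto simp: shift_iso_restr_at rk_restr_at)

lemma sym_quasi_power_mrank_insert:
  assumes Q: "sym_quasi_power M d Ms" and d: "1 \<le> d"
    and \<alpha>: "\<alpha> \<in> Sym (ground M) (d - 1)" and x: "x \<in> ground M" and A: "A \<subseteq> ground M"
    and spans: "mrank M (insert x A) = mrank M A"
  shows "mrank (Ms d) (insert (\<alpha> + {#x#}) ((\<lambda>b. \<alpha> + {#b#}) ` A))
    = mrank (Ms d) ((\<lambda>b. \<alpha> + {#b#}) ` A)"
proof (cases "\<forall>e\<in>#\<alpha>. \<not> loop M e")
  case True
  have iso: "shift_iso \<alpha> (Ms 1) (Ms d)"
    using sym_quasi_power_shift_iso[OF Q _ \<alpha> True] d by simp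
  have "mrank (Ms d) ((\<lambda>b. \<alpha> + {#b#}) ` Z) = mrank M Z" if Z: "Z \<subseteq> ground M" for Z
  proof -
    have "(\<lambda>e. {#e#}) ` Z \<subseteq> ground (Ms 1)"
      using sym_quasi_power_ground[OF Q, of 1] d Z by (auto simp: Sym_1)
    then have "mrank (Ms d) ((+) \<alpha> ` (\<lambda>e. {#e#}) ` Z) = mrank (Ms 1) ((\<lambda>e. {#e#}) ` Z)"
      by (rule shift_iso_mrank[OF iso])
    also have "\<dots> = mrank M Z" by (rule iso_via_mrank[OF sym_quasi_power_one[OF Q] Z])
    finally show ?thesis by (simp add: image_image)
  qed
  then show ?thesis using x A spans by (metis image_insert insert_subset)
next
  case False
  have Md: "matroid (Ms d)" using sym_quasi_power_matroid[OF Q] d by simp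
  have "mrank (Ms d) ((+) \<alpha> ` Sym (ground M) 1) = 0"
    using sym_quasi_power_loop[OF Q _ \<alpha>] False d by auto
  moreover have "mrank (Ms d) {\<alpha> + {#x#}} \<le> mrank (Ms d) ((+) \<alpha> ` Sym (ground M) 1)"
    using x by (intro mrank_mono[OF Md]) (auto simp: Sym_1)
  ultimately show ?thesis using mrank_insert_rank0[OF Md] by simp
qed

section \<open>Spanning by monomials over a basis\<close>

text \<open>
  When moreover \<open>R x \<subseteq> G\<close> spans x, replacing the factors outside G one at a time shows that
  \<open>S \<inter> Sym\<^sub>d(G)\<close> spans S in \<open>M\<^sub>d\<close> (\<open>mrank_eq_mrank_Int_Sym\<close>).
\<close>

definition replacement_closed :: "'a multiset set \<Rightarrow> 'a set \<Rightarrow> ('a \<Rightarrow> 'a set) \<Rightarrow> bool" where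
  "replacement_closed S G R \<longleftrightarrow> (\<forall>m\<in>S. (\<exists>x\<in>#m. x \<notin> G) \<longrightarrow>
      (\<exists>x\<in>#m. x \<notin> G \<and> (\<forall>b\<in>R x. m - {#x#} + {#b#} \<in> S)))"

lemma replacement_closed_Sym:
  assumes "\<And>x. R x \<subseteq> E"
  shows "replacement_closed (Sym E d) G R"
  unfolding replacement_closed_def
proof (intro ballI impI)
  fix m assume m: "m \<in> Sym E d" and "\<exists>x\<in>#m. x \<notin> G"
  then obtain x where x: "x \<in># m" "x \<notin> G" by blast
  then have "\<forall>b\<in>R x. m - {#x#} + {#b#} \<in> Sym E d" using diff_add_in_Sym[OF m] assms by blast
  then show "\<exists>x\<in>#m. x \<notin> G \<and> (\<forall>b\<in>R x. m - {#x#} + {#b#} \<in> Sym E d)" using x by blast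
qed

lemma mrank_insert_replacement:
  assumes Q: "sym_quasi_power M d Ms" and d: "1 \<le> d" and M: "matroid M"
    and F: "F \<subseteq> ground M" and G: "G \<subseteq> F" and S: "S \<subseteq> Sym F d"
    and R: "\<And>x. x \<in> F \<Longrightarrow> x \<notin> G \<Longrightarrow> R x \<subseteq> G \<and> mrank M (insert x (R x)) = mrank M (R x)"
    and closed: "replacement_closed S G R" and m: "m \<in> S"
  shows "mrank (Ms d) (insert m (S \<inter> Sym G d)) = mrank (Ms d) (S \<inter> Sym G d)"
  using m
proof (induction "size (filter_mset (\<lambda>x. x \<notin> G) m)" arbitrary: m rule: less_induct)
  case less
  let ?S0 = "S \<inter> Sym G d"
  have Md: "matroid (Ms d)" using sym_quasi_power_matroid[OF Q] d by simp
  have mF: "m \<in> Sym F d" using less.prems S by auto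
  show ?case
  proof (cases "\<exists>x\<in>#m. x \<notin> G")
    case False
    then have "m \<in> ?S0" using less.prems mF by (auto simp: Sym_def)
    then show ?thesis by (simp add: insert_absorb)
  next
    case True
    then obtain x where x: "x \<in># m" "x \<notin> G" and repl: "\<forall>b\<in>R x. m - {#x#} + {#b#} \<in> S"
      using closed less.prems unfolding replacement_closed_def by blast
    define \<alpha> where "\<alpha> = m - {#x#}"
    have m_eq: "m = \<alpha> + {#x#}" using x unfolding \<alpha>_def by simp
    have xF: "x \<in> F" using mF x by (auto simp: Sym_def)
    have Rx: "R x \<subseteq> G" "mrank M (insert x (R x)) = mrank M (R x)" using R xF x by auto
    have \<alpha>: "\<alpha> \<in> Sym (ground M) (d - 1)" using mF m_eq F by (auto simp: Sym_def)
    let ?A = "(\<lambda>b. \<alpha> + {#b#}) ` R x"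
    have "mrank (Ms d) (insert y ?S0) = mrank (Ms d) ?S0" if y: "y \<in> ?A" for y
    proof -
      obtain b where b: "b \<in> R x" "y = \<alpha> + {#b#}" using y by auto
      then have "size (filter_mset (\<lambda>x. x \<notin> G) y) < size (filter_mset (\<lambda>x. x \<notin> G) m)"
        using Rx x unfolding m_eq by auto
      moreover have "y \<in> S" using repl b unfolding \<alpha>_def by simp
      ultimately show ?thesis using less.hyps by blast
    qed
    moreover have "finite ?A"
      using Rx G F finite_ground[OF M] by (meson finite_imageI finite_subset order_trans)
    moreover have "mrank (Ms d) (insert m ?A) = mrank (Ms d) ?A"
      unfolding m_eq using sym_quasi_power_mrank_insert[OF Q d \<alpha> _ _ Rx(2)] xF Rx G F by auto
    ultimately show ?thesis using mrank_insert_eq_trans[OF Md] by blast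
  qed
qed

lemma mrank_eq_mrank_Int_Sym:
  assumes Q: "sym_quasi_power M d Ms" and d: "1 \<le> d" and M: "matroid M"
    and F: "F \<subseteq> ground M" and G: "G \<subseteq> F" and S: "S \<subseteq> Sym F d"
    and R: "\<And>x. x \<in> F \<Longrightarrow> x \<notin> G \<Longrightarrow> R x \<subseteq> G \<and> mrank M (insert x (R x)) = mrank M (R x)"
    and closed: "replacement_closed S G R"
  shows "mrank (Ms d) S = mrank (Ms d) (S \<inter> Sym G d)"
proof -
  have Md: "matroid (Ms d)" using sym_quasi_power_matroid[OF Q] d by simp
  have "S \<subseteq> Sym (ground M) d" using S Sym_mono[OF F] by blast
  then have "finite S" using finite_Sym[OF finite_ground[OF M]] by (rule finite_subset)
  moreover have "\<forall>m\<in>S. mrank (Ms d) (insert m (S \<inter> Sym G d)) = mrank (Ms d) (S \<inter> Sym G d)"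
    using mrank_insert_replacement[OF assms] by blast
  ultimately have "mrank (Ms d) ((S \<inter> Sym G d) \<union> S) = mrank (Ms d) (S \<inter> Sym G d)"
    by (rule mrank_Un_eq_if_insert_eq[OF Md])
  then show ?thesis by (simp add: Un_absorb1)
qed

lemma mrank_Sym_basis_of:
  assumes Q: "sym_quasi_power M d Ms" and d: "1 \<le> d" and M: "matroid M"
    and F: "F \<subseteq> ground M" and B: "basis_of M F B"
  shows "mrank (Ms d) (Sym F d) = mrank (Ms d) (Sym B d)"
proof -
  have BF: "B \<subseteq> F" using B by (simp add: basis_of_def)
  have "mrank (Ms d) (Sym F d) = mrank (Ms d) (Sym F d \<inter> Sym B d)"
    by (rule mrank_eq_mrank_Int_Sym[OF Q d M F BF order_refl _ replacement_closed_Sym[of "\<lambda>_. B"]])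
       (use BF basis_of_spans[OF M B] in auto)
  also have "Sym F d \<inter> Sym B d = Sym B d" using Sym_mono[OF BF] by auto
  finally show ?thesis .
qed

lemma indep_Sym_basis:
  assumes P: "sym_power M d Ms" and d: "1 \<le> d" and M: "matroid M"
    and B: "basis_of M (ground M) B"
  shows "indep (Ms d) (Sym B d)"
proof -
  have Q: "sym_quasi_power M d Ms" using P by (simp add: sym_power_def)
  have Md: "matroid (Ms d)" using sym_quasi_power_matroid[OF Q] d by simp
  have fB: "finite B" using B indep_finite[OF M] by (simp add: basis_of_def)
  have "mrank (Ms d) (Sym B d) = rk (Ms d)"
    using mrank_Sym_basis_of[OF Q d M order_refl B] sym_quasi_power_ground[OF Q, of d] d
    by (simp add: rk_def)
  also have "\<dots> = card (Sym B d)"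
    using P B card_Sym[OF fB] by (simp add: sym_power_def basis_of_def rk_def)
  finally show ?thesis using indep_if_mrank_eq_card[OF Md finite_Sym[OF fB]] by simp
qed

section \<open>Deletion\<close>

lemma sym_quasi_power_restrict:
  assumes Q: "sym_quasi_power M d Ms" and F: "F \<subseteq> ground M"
  shows "sym_quasi_power (restrict M F) d (\<lambda>i. restrict (Ms i) (Sym F i))"
proof (rule sym_quasi_power_intro)
  fix i assume i: "i \<in> {1..d}"
  then show "matroid (restrict (Ms i) (Sym F i)) \<and>
      ground (restrict (Ms i) (Sym F i)) = Sym (ground (restrict M F)) i"
    using restrict_matroid[OF sym_quasi_power_matroid[OF Q i]] sym_quasi_power_ground[OF Q i]
      Sym_mono[OF F] by simp
  fix \<alpha> assume \<alpha>: "\<alpha> \<in> Sym (ground (restrict M F)) (d - i)"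
  then have \<alpha>F: "set_mset \<alpha> \<subseteq> F" and \<alpha>E: "\<alpha> \<in> Sym (ground M) (d - i)"
    using Sym_mono[OF F] by (auto simp: Sym_def)
  have shift: "(+) \<alpha> ` Sym F i \<subseteq> Sym F d" using \<alpha> i by (auto simp: Sym_def)
  {
    assume "\<forall>e\<in>#\<alpha>. \<not> loop (restrict M F) e"
    then have "\<forall>e\<in>#\<alpha>. \<not> loop M e" using \<alpha>F loop_restrict[OF F] by blast
    then have "shift_iso \<alpha> (Ms i) (Ms d)" by (rule sym_quasi_power_shift_iso[OF Q i \<alpha>E])
    then show "shift_iso \<alpha> (restrict (Ms i) (Sym F i)) (restrict (Ms d) (Sym F d))"
      using shift_iso_restrict sym_quasi_power_ground[OF Q i] Sym_mono[OF F] shift by metis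
  next
    assume "\<exists>e\<in>#\<alpha>. loop (restrict M F) e"
    then have "\<exists>e\<in>#\<alpha>. loop M e" using \<alpha>F loop_restrict[OF F] by blast
    then have "mrank (Ms d) ((+) \<alpha> ` Sym (ground M) i) = 0" by (rule sym_quasi_power_loop[OF Q i \<alpha>E])
    moreover have "mrank (Ms d) ((+) \<alpha> ` Sym F i \<inter> Sym F d) \<le> mrank (Ms d) ((+) \<alpha> ` Sym (ground M) i)"
      using sym_quasi_power_matroid[OF Q] i Sym_mono[OF F] by (intro mrank_mono) auto
    ultimately show "mrank (restrict (Ms d) (Sym F d)) ((+) \<alpha> ` Sym (ground (restrict M F)) i) = 0"
      by (simp add: mrank_restrict)
  }
qed (use iso_via_restrict[OF sym_quasi_power_one[OF Q] F] in \<open>simp add: Sym_1\<close>)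

lemma rk_sym_power_restrict:
  assumes P: "sym_power M d Ms" and d: "1 \<le> d" and M: "matroid M" and F: "F \<subseteq> ground M"
  shows "rk (restrict (Ms d) (Sym F d)) = (rk (restrict M F) + d - 1) choose d"
proof -
  have Q: "sym_quasi_power M d Ms" using P by (simp add: sym_power_def)
  have Md: "matroid (Ms d)" using sym_quasi_power_matroid[OF Q] d by simp
  obtain BF where BF: "basis_of M F BF" using ex_basis_of[OF M] by blast
  obtain B where B: "basis_of M (ground M) B" "BF \<subseteq> B"
    using basis_of_extend_basis_of[OF M BF F] by blast
  have "indep (Ms d) (Sym BF d)"
    using indep_subset[OF Md indep_Sym_basis[OF P d M B(1)]] Sym_mono[OF B(2)] by blast
  then have "mrank (Ms d) (Sym BF d) = card (Sym BF d)" by (rule mrank_indep[OF Md])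
  also have "\<dots> = (card BF + d - 1) choose d"
    using BF indep_finite[OF M] card_Sym[of BF d] by (simp add: basis_of_def)
  finally show ?thesis
    using mrank_Sym_basis_of[OF Q d M F BF] sym_quasi_power_ground[OF Q, of d] d Sym_mono[OF F] BF
    by (simp add: rk_def mrank_restrict basis_of_def Int_absorb2)
qed

lemma sym_power_restrict:
  assumes "sym_power M d Ms" "1 \<le> d" "matroid M" "F \<subseteq> ground M"
  shows "sym_power (restrict M F) d (\<lambda>i. restrict (Ms i) (Sym F i))"
  using assms sym_quasi_power_restrict[of M d Ms F] rk_sym_power_restrict[OF assms]
  unfolding sym_power_def by blast

section \<open>Contraction\<close>

definition Sym_meeting :: "'a set \<Rightarrow> 'a set \<Rightarrow> nat \<Rightarrow> 'a multiset set" where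
  "Sym_meeting E C k = {m \<in> Sym E k. \<exists>c\<in>#m. c \<in> C}"

text \<open>
  A symmetric power has this property (\<open>indep_Sym_basis\<close>), and unlike the rank condition it
  descends from d to \<open>d - 1\<close>, which the inductive construction of the contracted quasi power needs.
\<close>

definition indep_bases_quasi_power :: "'a matroid \<Rightarrow> nat \<Rightarrow> (nat \<Rightarrow> 'a multiset matroid) \<Rightarrow> bool" where
  "indep_bases_quasi_power M d Ms \<longleftrightarrow> sym_quasi_power M d Ms \<and>
     (\<forall>B. basis_of M (ground M) B \<longrightarrow> indep (Ms d) (Sym B d))"

lemma Sym_meeting_subset: "Sym_meeting E C k \<subseteq> Sym E k"
  by (auto simp: Sym_meeting_def)

lemma Sym_diff_Sym_meeting: "Sym E k - Sym_meeting E C k = Sym (E - C) k"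
  by (auto simp: Sym_meeting_def Sym_def)

lemma Sym_meeting_1: "C \<subseteq> E \<Longrightarrow> Sym_meeting E C (Suc 0) = (\<lambda>e. {#e#}) ` C"
  by (auto simp: Sym_meeting_def Sym_1)

lemma sym_quasi_power_truncate:
  assumes Q: "sym_quasi_power M d Ms" and d: "2 \<le> d"
    and x0: "x0 \<in> ground M" "\<not> loop M x0"
  shows "sym_quasi_power M (d - 1) Ms"
proof (rule sym_quasi_power_intro)
  let ?E = "ground M"
  have d1: "d - 1 \<in> {1..d}" using d by auto
  have top: "shift_iso {#x0#} (Ms (d - 1)) (Ms d)"
    using sym_quasi_power_shift_iso[OF Q d1] x0 d by (simp add: Sym_def)
  fix i assume i: "i \<in> {1..d - 1}"
  then have iD: "i \<in> {1..d}" by auto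
  show "matroid (Ms i) \<and> ground (Ms i) = Sym ?E i"
    using sym_quasi_power_matroid[OF Q iD] sym_quasi_power_ground[OF Q iD] by simp
  fix \<alpha> assume \<alpha>: "\<alpha> \<in> Sym ?E (d - 1 - i)"
  have x0\<alpha>: "{#x0#} + \<alpha> \<in> Sym ?E (d - i)" using \<alpha> i x0 by (auto simp: Sym_def)
  have sub: "(+) \<alpha> ` ground (Ms i) \<subseteq> ground (Ms (d - 1))"
    using sym_quasi_power_ground[OF Q iD] sym_quasi_power_ground[OF Q d1] \<alpha> i by (auto simp: Sym_def)
  {
    assume "\<forall>e\<in>#\<alpha>. \<not> loop M e"
    then have "shift_iso ({#x0#} + \<alpha>) (Ms i) (Ms d)"
      using sym_quasi_power_shift_iso[OF Q iD x0\<alpha>] x0 by auto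
    then show "shift_iso \<alpha> (Ms i) (Ms (d - 1))" by (rule shift_iso_cancel[OF _ top sub])
  next
    assume "\<exists>e\<in>#\<alpha>. loop M e"
    then have "mrank (Ms d) ((+) ({#x0#} + \<alpha>) ` Sym ?E i) = 0"
      using sym_quasi_power_loop[OF Q iD x0\<alpha>] by auto
    moreover have "(+) \<alpha> ` Sym ?E i \<subseteq> ground (Ms (d - 1))"
      using sub sym_quasi_power_ground[OF Q iD] by simp
    ultimately show "mrank (Ms (d - 1)) ((+) \<alpha> ` Sym ?E i) = 0"
      using shift_iso_mrank[OF top, of "(+) \<alpha> ` Sym ?E i"] image_plus_image_plus[of "{#x0#}" \<alpha>]
      by metis
  }
qed (use sym_quasi_power_one[OF Q] in simp)

lemma indep_bases_quasi_power_truncate: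
  assumes M: "matroid M" and Q: "indep_bases_quasi_power M d Ms" and d: "2 \<le> d"
    and x0: "x0 \<in> ground M" "\<not> loop M x0"
  shows "indep_bases_quasi_power M (d - 1) Ms"
  unfolding indep_bases_quasi_power_def
proof (intro conjI allI impI)
  have S: "sym_quasi_power M d Ms" using Q by (simp add: indep_bases_quasi_power_def)
  then show "sym_quasi_power M (d - 1) Ms" by (rule sym_quasi_power_truncate[OF _ d x0])
  have d1: "d - 1 \<in> {1..d}" and dd: "d \<in> {1..d}" using d by auto
  fix B assume B: "basis_of M (ground M) B"
  have BE: "B \<subseteq> ground M" using B by (simp add: basis_of_def)
  have "card {x0} \<le> card B"
    using card_le_mrank[OF M, of "{x0}"] x0 B by (simp add: loop_def basis_of_def)
  then have "B \<noteq> {}" by auto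
  then obtain b where b: "b \<in> B" by blast
  have "indep M {b}" using indep_subset[OF M, of B "{b}"] B b by (simp add: basis_of_def)
  moreover have "{#b#} \<in> Sym (ground M) (d - (d - 1))" using b BE d by (auto simp: Sym_def)
  ultimately have iso: "shift_iso {#b#} (Ms (d - 1)) (Ms d)"
    using sym_quasi_power_shift_iso[OF S d1] by (simp add: loop_def)
  have "(+) {#b#} ` Sym B (d - 1) \<subseteq> Sym B d" using b d by (auto simp: Sym_def)
  moreover have "indep (Ms d) (Sym B d)" using Q B by (simp add: indep_bases_quasi_power_def)
  ultimately have "indep (Ms d) ((+) {#b#} ` Sym B (d - 1))"
    using indep_subset[OF sym_quasi_power_matroid[OF S dd]] by blast
  moreover have "Sym B (d - 1) \<subseteq> ground (Ms (d - 1))"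
    using sym_quasi_power_ground[OF S d1] Sym_mono[OF BE] by simp
  ultimately show "indep (Ms (d - 1)) (Sym B (d - 1))" using iso by (simp add: shift_iso_iff)
qed

lemma replacement_closed_Sym_meeting:
  assumes BC: "BC \<subseteq> C" "BC \<subseteq> B" and B: "B \<subseteq> E"
  shows "replacement_closed (Sym_meeting E C k) B (\<lambda>x. if x \<in> C then BC else B)"
  unfolding replacement_closed_def
proof (intro ballI impI)
  fix m assume m: "m \<in> Sym_meeting E C k" and "\<exists>x\<in>#m. x \<notin> B"
  then obtain y where y: "y \<in># m" "y \<notin> B" by blast
  have mE: "m \<in> Sym E k" and "\<exists>c\<in>#m. c \<in> C" using m by (auto simp: Sym_meeting_def)
  then obtain c where c: "c \<in># m" "c \<in> C" by blast
  show "\<exists>x\<in>#m. x \<notin> B \<and> (\<forall>b\<in>(if x \<in> C then BC else B). m - {#x#} + {#b#} \<in> Sym_meeting E C k)"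
  proof (cases "\<exists>x\<in>#m. x \<in> C \<and> x \<notin> B")
    case True
    then obtain x where x: "x \<in># m" "x \<in> C" "x \<notin> B" by blast
    have "m - {#x#} + {#b#} \<in> Sym_meeting E C k" if "b \<in> BC" for b
      using diff_add_in_Sym[OF mE x(1), of b] that BC B by (auto simp: Sym_meeting_def)
    then show ?thesis using x by auto
  next
    case False
    then have "c \<noteq> y" using c y by blast
    then have "c \<in># m - {#y#}" using c(1) by (simp add: in_diff_count)
    then have "m - {#y#} + {#b#} \<in> Sym_meeting E C k" if "b \<in> B" for b
      using diff_add_in_Sym[OF mE y(1), of b] that B c(2) unfolding Sym_meeting_def by auto
    moreover have "y \<notin> C" using False y by blast
    ultimately show ?thesis using y by auto
  qed
qed

lemma replacement_closed_shift:
  assumes closed: "replacement_closed S G R" and e: "e \<in> G"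
  shows "replacement_closed ((+) {#e#} ` S) G R"
  unfolding replacement_closed_def
proof (intro ballI impI)
  fix m assume m: "m \<in> (+) {#e#} ` S" and out: "\<exists>x\<in>#m. x \<notin> G"
  then obtain \<beta> where \<beta>: "\<beta> \<in> S" "m = {#e#} + \<beta>" by blast
  then have "\<exists>x\<in>#\<beta>. x \<notin> G" using out e by auto
  then obtain x where x: "x \<in># \<beta>" "x \<notin> G" "\<forall>b\<in>R x. \<beta> - {#x#} + {#b#} \<in> S"
    using closed \<beta>(1) unfolding replacement_closed_def by blast
  have "m - {#x#} + {#b#} = {#e#} + (\<beta> - {#x#} + {#b#})" for b
    using x(1) \<beta>(2) by (simp add: multiset_diff_union_assoc)
  then show "\<exists>x\<in>#m. x \<notin> G \<and> (\<forall>b\<in>R x. m - {#x#} + {#b#} \<in> (+) {#e#} ` S)"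
    using x \<beta>(2) by auto
qed

lemma mrank_eq_card_Int_Sym_basis:
  assumes Q: "sym_quasi_power M d Ms" and d: "1 \<le> d" and M: "matroid M"
    and S: "S \<subseteq> Sym (ground M) d" and B: "B \<subseteq> ground M"
    and R: "\<And>x. x \<in> ground M \<Longrightarrow> x \<notin> B \<Longrightarrow> R x \<subseteq> B \<and> mrank M (insert x (R x)) = mrank M (R x)"
    and closed: "replacement_closed S B R" and SB: "indep (Ms d) (Sym B d)"
  shows "mrank (Ms d) S = card (S \<inter> Sym B d)"
proof -
  have Md: "matroid (Ms d)" using sym_quasi_power_matroid[OF Q] d by simp
  have "mrank (Ms d) S = mrank (Ms d) (S \<inter> Sym B d)"
    by (rule mrank_eq_mrank_Int_Sym[OF Q d M order_refl B S R closed])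
  also have "\<dots> = card (S \<inter> Sym B d)"
    by (rule mrank_indep[OF Md indep_subset[OF Md SB]]) auto
  finally show ?thesis .
qed

lemma ground_contract_Sym_meeting:
  "sym_quasi_power M d Ms \<Longrightarrow> k \<in> {1..d} \<Longrightarrow>
    ground (contract (Ms k) (Sym_meeting (ground M) C k)) = Sym (ground M - C) k"
  using sym_quasi_power_ground[of M d Ms k] Sym_diff_Sym_meeting by simp

lemma image_plus_Sym_Int_Sym_meeting:
  assumes e: "e \<in> E" "e \<notin> C" and d: "1 \<le> d"
  shows "(+) {#e#} ` Sym E (d - 1) \<inter> Sym_meeting E C d = (+) {#e#} ` Sym_meeting E C (d - 1)"
proof (intro equalityI subsetI)
  fix m assume m: "m \<in> (+) {#e#} ` Sym E (d - 1) \<inter> Sym_meeting E C d"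
  then obtain \<beta> where \<beta>: "\<beta> \<in> Sym E (d - 1)" "m = {#e#} + \<beta>" by blast
  obtain c where "c \<in># m" "c \<in> C" using m by (auto simp: Sym_meeting_def)
  then have "\<beta> \<in> Sym_meeting E C (d - 1)" using \<beta> e by (auto simp: Sym_meeting_def)
  then show "m \<in> (+) {#e#} ` Sym_meeting E C (d - 1)" using \<beta>(2) by blast
qed (use e d in \<open>auto simp: Sym_meeting_def Sym_def\<close>)

lemma mrank_Sym_meeting_modular:
  assumes M: "matroid M" and Q: "indep_bases_quasi_power M d Ms" and d: "1 \<le> d"
    and C: "C \<subseteq> ground M" and e: "e \<in> ground M" and spans: "mrank M (insert e C) \<noteq> mrank M C"
  defines "Y \<equiv> (+) {#e#} ` Sym (ground M) (d - 1)" and "T \<equiv> Sym_meeting (ground M) C d"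
  shows "mrank (Ms d) Y + mrank (Ms d) T \<le> mrank (Ms d) (Y \<union> T) + mrank (Ms d) (Y \<inter> T)"
proof -
  let ?E = "ground M"
  have S: "sym_quasi_power M d Ms" using Q by (simp add: indep_bases_quasi_power_def)
  have Md: "matroid (Ms d)" using sym_quasi_power_matroid[OF S] d by simp
  obtain BC where BC: "basis_of M C BC" using ex_basis_of[OF M] by blast
  obtain B where B: "basis_of M ?E B" "insert e BC \<subseteq> B"
    using basis_of_extend_insert[OF M BC _ spans] C e by blast
  have BE: "B \<subseteq> ?E" and eB: "e \<in> B" and BCB: "BC \<subseteq> C" "BC \<subseteq> B"
    using B BC by (auto simp: basis_of_def)
  define R where "R x = (if x \<in> C then BC else B)" for x
  have R: "R x \<subseteq> B \<and> mrank M (insert x (R x)) = mrank M (R x)" if "x \<in> ?E" "x \<notin> B" for x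
    unfolding R_def using basis_of_pair_spans[OF M BC B(1) BCB(2) that(1)] .
  have SB: "indep (Ms d) (Sym B d)" using Q B by (simp add: indep_bases_quasi_power_def)
  have eC: "e \<notin> C" using spans by (auto simp: insert_absorb)
  have YT: "Y \<inter> T = (+) {#e#} ` Sym_meeting ?E C (d - 1)"
    unfolding Y_def T_def by (rule image_plus_Sym_Int_Sym_meeting[OF e eC d])
  have Y_sub: "Y \<subseteq> Sym ?E d" using e d by (auto simp: Y_def Sym_def)
  have clT: "replacement_closed T B R"
    unfolding T_def R_def by (rule replacement_closed_Sym_meeting[OF BCB(1,2) BE])
  have clY: "replacement_closed Y B R"
    unfolding Y_def by (rule replacement_closed_shift[OF replacement_closed_Sym eB])
      (use BCB BE in \<open>auto simp: R_def\<close>)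
  have clYT: "replacement_closed (Y \<inter> T) B R"
    unfolding YT R_def by (rule replacement_closed_shift[OF replacement_closed_Sym_meeting[OF BCB(1,2) BE] eB])
  have rank: "mrank (Ms d) X = card (X \<inter> Sym B d)"
    if X: "X \<subseteq> Sym ?E d" and cl: "replacement_closed X B R" for X
    using R by (rule mrank_eq_card_Int_Sym_basis[OF S d M X BE _ cl SB])
  have "mrank (Ms d) Y = card (Y \<inter> Sym B d)" by (rule rank[OF Y_sub clY])
  moreover have "mrank (Ms d) T = card (T \<inter> Sym B d)"
    by (rule rank[OF _ clT]) (simp add: T_def Sym_meeting_subset)
  moreover have "mrank (Ms d) (Y \<inter> T) = card (Y \<inter> T \<inter> Sym B d)"
    by (rule rank[OF _ clYT]) (use Y_sub in blast)
  ultimately show ?thesis by (rule mrank_modular_if_indep[OF Md SB])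
qed

lemma shift_iso_contract_Sym_meeting:
  assumes M: "matroid M" and Q: "indep_bases_quasi_power M d Ms" and d: "2 \<le> d"
    and C: "C \<subseteq> ground M" and e: "e \<in> ground M" and spans: "mrank M (insert e C) \<noteq> mrank M C"
  shows "shift_iso {#e#} (contract (Ms (d - 1)) (Sym_meeting (ground M) C (d - 1)))
    (contract (Ms d) (Sym_meeting (ground M) C d))"
  unfolding shift_iso_iff
proof (intro allI impI)
  let ?E = "ground M" and ?r = "mrank (Ms d)"
  let ?T = "Sym_meeting ?E C d" and ?T1 = "Sym_meeting ?E C (d - 1)"
  let ?Y = "(+) {#e#} ` Sym ?E (d - 1)"
  have S: "sym_quasi_power M d Ms" using Q by (simp add: indep_bases_quasi_power_def)
  have d1: "d - 1 \<in> {1..d}" and dd: "d \<in> {1..d}" using d by auto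
  have eC: "e \<notin> C" using spans by (auto simp: insert_absorb)
  have "\<not> loop M e" by (rule not_loop_if_mrank_insert_neq[OF M spans])
  then have top: "shift_iso {#e#} (Ms (d - 1)) (Ms d)"
    using sym_quasi_power_shift_iso[OF S d1] e d by (simp add: Sym_def)
  have YT: "?Y \<inter> ?T = (+) {#e#} ` ?T1"
    using image_plus_Sym_Int_Sym_meeting[OF e eC] d by simp
  have modular: "?r ?Y + ?r ?T \<le> ?r (?Y \<union> ?T) + ?r (?Y \<inter> ?T)"
    using mrank_Sym_meeting_modular[OF M Q _ C e spans] d by simp
  have g1: "ground (Ms (d - 1)) = Sym ?E (d - 1)" by (rule sym_quasi_power_ground[OF S d1])
  fix X assume "X \<subseteq> ground (contract (Ms (d - 1)) ?T1)"
  then have X: "X \<subseteq> Sym (?E - C) (d - 1)" using ground_contract_Sym_meeting[OF S d1] by simp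
  then have XE: "X \<subseteq> Sym ?E (d - 1)" using Sym_mono[of "?E - C" ?E] by auto
  have eX: "(+) {#e#} ` X \<subseteq> Sym (?E - C) d"
  proof
    fix m assume "m \<in> (+) {#e#} ` X"
    then obtain x where "x \<in> X" "m = {#e#} + x" by blast
    then show "m \<in> Sym (?E - C) d" using X e eC d by (auto simp: Sym_def)
  qed
  have T1: "?T1 \<subseteq> ground (Ms (d - 1))" using g1 by (simp add: Sym_meeting_subset)
  then have "X \<union> ?T1 \<subseteq> ground (Ms (d - 1))" using XE g1 by simp
  then have "mrank (Ms (d - 1)) (X \<union> ?T1) = ?r ((+) {#e#} ` X \<union> ?Y \<inter> ?T)"
    using shift_iso_mrank[OF top, of "X \<union> ?T1"] YT by (simp add: image_Un)
  moreover have "mrank (Ms (d - 1)) ?T1 = ?r (?Y \<inter> ?T)"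
    using shift_iso_mrank[OF top T1] YT by simp
  moreover have "?r ((+) {#e#} ` X \<union> ?Y \<inter> ?T) + ?r ?T = ?r ((+) {#e#} ` X \<union> ?T) + ?r (?Y \<inter> ?T)"
    using XE by (intro mrank_Un_modular[OF sym_quasi_power_matroid[OF S dd] modular]) auto
  moreover have "card ((+) {#e#} ` X) = card X" by (rule card_image) (simp add: inj_on_def)
  moreover have "X \<subseteq> ground (Ms (d - 1)) - ?T1" and "(+) {#e#} ` X \<subseteq> ground (Ms d) - ?T"
    using X eX sym_quasi_power_ground[OF S dd] g1 by (simp_all add: Sym_diff_Sym_meeting)
  ultimately show "indep (contract (Ms (d - 1)) ?T1) X \<longleftrightarrow>
      indep (contract (Ms d) ?T) ((+) {#e#} ` X)"
    by auto
qed

lemma shift_iso_contract_Sym_meeting_power: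
  assumes M: "matroid M" and C: "C \<subseteq> ground M"
  shows "indep_bases_quasi_power M d Ms \<Longrightarrow> i \<in> {1..d} \<Longrightarrow> \<alpha> \<in> Sym (ground M - C) (d - i) \<Longrightarrow>
    \<forall>e\<in>#\<alpha>. \<not> loop (contract M C) e \<Longrightarrow>
    shift_iso \<alpha> (contract (Ms i) (Sym_meeting (ground M) C i)) (contract (Ms d) (Sym_meeting (ground M) C d))"
proof (induction d arbitrary: \<alpha>)
  case (Suc n)
  let ?N = "\<lambda>k. contract (Ms k) (Sym_meeting (ground M) C k)"
  show ?case
  proof (cases "i = Suc n")
    case True
    then show ?thesis using Suc.prems(3) by (simp add: Sym_def shift_iso_empty)
  next
    case False
    then have i: "i \<in> {1..n}" and n: "1 \<le> n" using Suc.prems(2) by auto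
    then have "\<alpha> \<noteq> {#}" using Suc.prems(3) by (auto simp: Sym_def)
    then obtain e where e: "e \<in># \<alpha>" by (meson multiset_nonemptyE)
    define \<alpha>' where "\<alpha>' = \<alpha> - {#e#}"
    have \<alpha>_eq: "\<alpha> = {#e#} + \<alpha>'" using e unfolding \<alpha>'_def by simp
    have eE: "e \<in> ground M - C" using e Suc.prems(3) by (auto simp: Sym_def)
    have \<alpha>': "\<alpha>' \<in> Sym (ground M - C) (n - i)"
      using Suc.prems(3) \<alpha>_eq i by (auto simp: Sym_def)
    have "\<not> loop (contract M C) e" using Suc.prems(4) e by blast
    then have spans: "mrank M (insert e C) \<noteq> mrank M C" using loop_contract_iff[OF M eE] by simp
    have Qn: "indep_bases_quasi_power M n Ms"
      using indep_bases_quasi_power_truncate[OF M Suc.prems(1) _ _ not_loop_if_mrank_insert_neq[OF M spans]] n eE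
      by simp
    have S: "sym_quasi_power M n Ms" using Qn by (simp add: indep_bases_quasi_power_def)
    have "shift_iso \<alpha>' (?N i) (?N n)" using Suc.IH[OF Qn i \<alpha>'] Suc.prems(4) \<alpha>_eq by simp
    moreover have "shift_iso {#e#} (?N n) (?N (Suc n))"
      using shift_iso_contract_Sym_meeting[OF M Suc.prems(1) _ C _ spans] n eE by simp
    moreover have "(+) \<alpha>' ` ground (?N i) \<subseteq> ground (?N n)"
      using ground_contract_Sym_meeting[OF S i] ground_contract_Sym_meeting[OF S, of n] n \<alpha>' i
      by (auto simp: Sym_def)
    ultimately show ?thesis unfolding \<alpha>_eq by (rule shift_iso_trans)
  qed
qed simp

lemma mrank_contract_Sym_meeting_loop:
  assumes Q: "sym_quasi_power M d Ms" and d: "1 \<le> d"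
    and C: "C \<subseteq> ground M" and e: "e \<in> ground M" and spans: "mrank M (insert e C) = mrank M C"
    and X: "\<And>m. m \<in> X \<Longrightarrow> m \<in> Sym (ground M) d \<and> e \<in># m"
  shows "mrank (contract (Ms d) (Sym_meeting (ground M) C d)) X = 0"
proof -
  let ?T = "Sym_meeting (ground M) C d"
  have Md: "matroid (Ms d)" using sym_quasi_power_matroid[OF Q] d by simp
  have "\<not> indep (contract (Ms d) ?T) {m}" if "m \<in> X" for m
  proof -
    have m: "m \<in> Sym (ground M) d" "e \<in># m" using X[OF that] by auto
    define \<gamma> where "\<gamma> = m - {#e#}"
    have m_eq: "m = \<gamma> + {#e#}" using m(2) unfolding \<gamma>_def by simp
    have \<gamma>: "\<gamma> \<in> Sym (ground M) (d - 1)" using m(1) m_eq by (auto simp: Sym_def)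
    have "mrank (Ms d) (insert m ((\<lambda>b. \<gamma> + {#b#}) ` C)) = mrank (Ms d) ((\<lambda>b. \<gamma> + {#b#}) ` C)"
      unfolding m_eq by (rule sym_quasi_power_mrank_insert[OF Q d \<gamma> e C spans])
    moreover have "(\<lambda>b. \<gamma> + {#b#}) ` C \<subseteq> ?T" using \<gamma> C d by (auto simp: Sym_meeting_def Sym_def)
    ultimately have "mrank (Ms d) (insert m ?T) = mrank (Ms d) ?T"
      by (rule mrank_insert_eq_mono[OF Md, rotated])
    then show ?thesis by simp
  qed
  then show ?thesis by (intro mrank_eq_0I[OF contract_matroid[OF Md]] ballI)
qed

lemma sym_quasi_power_contract:
  assumes M: "matroid M" and Q: "indep_bases_quasi_power M d Ms" and C: "C \<subseteq> ground M"
  shows "sym_quasi_power (contract M C) d (\<lambda>i. contract (Ms i) (Sym_meeting (ground M) C i))"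
proof (rule sym_quasi_power_intro)
  have S: "sym_quasi_power M d Ms" using Q by (simp add: indep_bases_quasi_power_def)
  show "iso_via (\<lambda>e. {#e#}) (contract M C) (contract (Ms 1) (Sym_meeting (ground M) C 1))"
    using iso_via_contract[OF sym_quasi_power_one[OF S] C] Sym_meeting_1[OF C] by simp
  fix i assume i: "i \<in> {1..d}"
  show "matroid (contract (Ms i) (Sym_meeting (ground M) C i)) \<and>
      ground (contract (Ms i) (Sym_meeting (ground M) C i)) = Sym (ground (contract M C)) i"
    using contract_matroid[OF sym_quasi_power_matroid[OF S i]] ground_contract_Sym_meeting[OF S i]
    by simp
  fix \<alpha> assume \<alpha>: "\<alpha> \<in> Sym (ground (contract M C)) (d - i)"
  {
    assume "\<forall>e\<in>#\<alpha>. \<not> loop (contract M C) e"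
    then show "shift_iso \<alpha> (contract (Ms i) (Sym_meeting (ground M) C i))
        (contract (Ms d) (Sym_meeting (ground M) C d))"
      using shift_iso_contract_Sym_meeting_power[OF M C Q i] \<alpha> by simp
  next
    assume "\<exists>e\<in>#\<alpha>. loop (contract M C) e"
    then obtain e where e: "e \<in># \<alpha>" "loop (contract M C) e" by blast
    then have eE: "e \<in> ground M - C" using \<alpha> by (auto simp: Sym_def)
    show "mrank (contract (Ms d) (Sym_meeting (ground M) C d)) ((+) \<alpha> ` Sym (ground (contract M C)) i) = 0"
      using e(2) loop_contract_iff[OF M eE] \<alpha> i e(1)
      by (intro mrank_contract_Sym_meeting_loop[OF S _ C _ _]) (auto simp: Sym_def)
  }
qed

lemma rk_sym_power_contract:
  assumes P: "sym_power M d Ms" and d: "1 \<le> d" and M: "matroid M" and C: "C \<subseteq> ground M"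
  shows "rk (contract (Ms d) (Sym_meeting (ground M) C d)) = (rk (contract M C) + d - 1) choose d"
proof -
  let ?E = "ground M" and ?T = "Sym_meeting (ground M) C d"
  have S: "sym_quasi_power M d Ms" using P by (simp add: sym_power_def)
  have Md: "matroid (Ms d)" and gd: "ground (Ms d) = Sym ?E d"
    using sym_quasi_power_matroid[OF S] sym_quasi_power_ground[OF S] d by auto
  obtain BC where BC: "basis_of M C BC" using ex_basis_of[OF M] by blast
  obtain B where B: "basis_of M ?E B" "BC \<subseteq> B" using basis_of_extend_basis_of[OF M BC C] by blast
  have BE: "B \<subseteq> ?E" and BCB: "BC \<subseteq> C" "BC \<subseteq> B" using B BC by (auto simp: basis_of_def)
  have fB: "finite B" using B indep_finite[OF M] by (simp add: basis_of_def)
  have SB: "indep (Ms d) (Sym B d)" by (rule indep_Sym_basis[OF P d M B(1)])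
  have "mrank (Ms d) ?T = card (?T \<inter> Sym B d)"
    using basis_of_pair_spans[OF M BC B]
    by (rule mrank_eq_card_Int_Sym_basis[OF S d M Sym_meeting_subset BE _
          replacement_closed_Sym_meeting[OF BCB BE] SB])
  moreover have "?T \<inter> Sym B d = Sym B d - Sym (B - C) d"
    using BE by (auto simp: Sym_meeting_def Sym_def)
  moreover have "card (Sym B d - Sym (B - C) d) = card (Sym B d) - card (Sym (B - C) d)"
    using Sym_mono[of "B - C" B] finite_Sym[OF fB] by (intro card_Diff_subset) (auto intro: finite_subset)
  moreover have "rk (Ms d) = card (Sym B d)"
    using P B card_Sym[OF fB] by (simp add: sym_power_def basis_of_def rk_def)
  moreover have "rk (contract (Ms d) ?T) = rk (Ms d) - mrank (Ms d) ?T"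
    using gd by (intro rk_contract[OF Md]) (simp add: Sym_meeting_subset)
  moreover have "card (Sym (B - C) d) \<le> card (Sym B d)"
    using card_mono[OF finite_Sym[OF fB] Sym_mono[of "B - C" B]] by blast
  ultimately have "rk (contract (Ms d) ?T) = card (Sym (B - C) d)" by simp
  also have "\<dots> = (card (B - C) + d - 1) choose d" using fB by (intro card_Sym) simp
  also have "card (B - C) = rk (contract M C)"
  proof -
    have "B \<inter> C = BC" using basis_of_Int[OF M BC] B by (simp add: basis_of_def)
    then have "card (B - C) = card B - card BC" using fB by (metis card_Diff_subset_Int finite_Int)
    then show ?thesis using rk_contract[OF M C] B BC by (simp add: basis_of_def rk_def)
  qed
  finally show ?thesis .
qed

lemma sym_power_contract:
  assumes "sym_power M d Ms" "1 \<le> d" "matroid M" "C \<subseteq> ground M"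
  shows "sym_power (contract M C) d (\<lambda>i. contract (Ms i) (Sym_meeting (ground M) C i))"
proof -
  have "indep_bases_quasi_power M d Ms"
    using assms indep_Sym_basis unfolding indep_bases_quasi_power_def sym_power_def by blast
  then show ?thesis
    using sym_quasi_power_contract rk_sym_power_contract assms unfolding sym_power_def by blast
qed

theorem corollary3p8:
  fixes M N :: "'a matroid" and d :: nat
  assumes "d \<ge> 1" and "matroid M" and "admits_sym_power M d" and "minor N M"
  shows "admits_sym_power N d"
proof -
  obtain Ms where P: "sym_power M d Ms" using assms(3) by (auto simp: admits_sym_power_def)
  obtain C D where C: "C \<subseteq> ground M" and N: "N = delete (contract M C) D"
    using assms(4) by (auto simp: minor_def)
  have "sym_power (contract M C) d (\<lambda>i. contract (Ms i) (Sym_meeting (ground M) C i))"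
    by (rule sym_power_contract[OF P assms(1,2) C])
  then have "sym_power N d (\<lambda>i. restrict (contract (Ms i) (Sym_meeting (ground M) C i))
      (Sym (ground (contract M C) - D) i))"
    unfolding N delete_def by (rule sym_power_restrict[OF _ assms(1) contract_matroid[OF assms(2)]]) auto
  then show ?thesis by (auto simp: admits_sym_power_def)
qed

end
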